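(* Let $n\ge 8$ be an even integer and let $W_{3,n}$ be the $3$-regular Kn\"odel graph. Then $W_{3,n}$ is $\gamma$-stable if and only if $n\not\equiv 4 \pmod 8$.
   Context: For an even integer $n\ge 2$ and $1\le\Delta\le\lfloor\log_2 n\rfloor$, the Kn\"odel graph $W_{\Delta,n}$ is the $\Delta$-regular bipartite graph on the $n$ vertices $(i,j)$, $i\in\{1,2\}$, $0\le j\le n/2-1$, in which for every $j$ the vertex $(1,j)$ is adjacent to the vertices $(2,(j+2^k-1)\bmod (n/2))$ for $k=0,1,\dots,\Delta-1$ (and there are no other edges); in particular $W_{3,n}$ is defined for even $n\ge 8$. A set $D$ of vertices of a graph $G$ is dominating if every vertex not in $D$ is adjacent to a vertex of $D$; $\gamma(G)$ is the minimum size of a dominating set. A graph $G$ is $\gamma$-stable (domination vertex stable) if $\gamma(G-u)=\gamma(G)$ for every vertex $u$ of $G$, where $G-u$ is the graph obtained by deleting $u$. *)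

theory Defs
  imports Main
begin

text \<open>A (simple, undirected) graph is given by a vertex set V and a symmetric
adjacency relation adj.  Vertex deletion G - u keeps the relation and removes u
from the vertex set.\<close>

definition dominating :: "'a set \<Rightarrow> ('a \<Rightarrow> 'a \<Rightarrow> bool) \<Rightarrow> 'a set \<Rightarrow> bool" where
  "dominating V adj D \<longleftrightarrow> D \<subseteq> V \<and> (\<forall>v \<in> V - D. \<exists>d \<in> D. adj v d)"

definition domination_number :: "'a set \<Rightarrow> ('a \<Rightarrow> 'a \<Rightarrow> bool) \<Rightarrow> nat" where
  "domination_number V adj = (LEAST k. \<exists>D. dominating V adj D \<and> card D = k)"

definition gamma_stable :: "'a set \<Rightarrow> ('a \<Rightarrow> 'a \<Rightarrow> bool) \<Rightarrow> bool" where
  "gamma_stable V adj \<longleftrightarrow>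
     (\<forall>u \<in> V. domination_number (V - {u}) adj = domination_number V adj)"

definition knodel_vertices :: "nat \<Rightarrow> (nat \<times> nat) set" where
  "knodel_vertices n = {1,2} \<times> {0..<n div 2}"

definition knodel_edge :: "nat \<Rightarrow> nat \<Rightarrow> (nat \<times> nat) \<Rightarrow> (nat \<times> nat) \<Rightarrow> bool" where
  "knodel_edge \<Delta> n x y \<longleftrightarrow>
     x \<in> knodel_vertices n \<and> y \<in> knodel_vertices n \<and>
     (\<exists>k < \<Delta>.
        (fst x = 1 \<and> fst y = 2 \<and> snd y = (snd x + 2 ^ k - 1) mod (n div 2)) \<or>
        (fst y = 1 \<and> fst x = 2 \<and> snd x = (snd y + 2 ^ k - 1) mod (n div 2)))"

end

theory Submission
  imports Defs
begin

(* Write m = n/2 for the number of vertices on each side. Every closed neighbourhood of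
   W_{3,n} has at most 4 vertices, so gamma >= m/2. Counting each side separately (a
   dominator covers one vertex of its own side and at most three of the other) raises
   this to m/2 + 1 when m = 2 (mod 4). The 4-periodic pattern (1,4i), (2,4i+2), repaired
   at the end when m = 1 (mod 4), attains ceil(m/2) in the other cases.

   When m = 2 (mod 4) the pattern of size m/2 dominates everything except (1, m-3), so
   deleting that vertex lowers gamma. Otherwise a minimum dominating set has fewer than m
   vertices and misses a vertex on each side; the rotation j -> j + s is an automorphism,
   so some minimum dominating set avoids any prescribed u, giving gamma(G-u) <= gamma(G),
   while the counting bound applied to the 2m-1 remaining vertices still gives
   gamma(G-u) >= ceil(m/2). *)

lemma domination_number_le:
  assumes "dominating V adj D"
  shows "domination_number V adj \<le> card D"
  unfolding domination_number_def using assms by (blast intro: Least_le)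

lemma obtain_minimum_dominating:
  obtains D where "dominating V adj D" "card D = domination_number V adj"
proof -
  have "dominating V adj V"
    by (simp add: dominating_def)
  then have "\<exists>k D. dominating V adj D \<and> card D = k"
    by blast
  then have "\<exists>D. dominating V adj D \<and> card D = domination_number V adj"
    unfolding domination_number_def by (rule LeastI_ex)
  with that show ?thesis
    by blast
qed

lemma dominating_Diff_singleton:
  assumes "dominating V adj D" "u \<notin> D"
  shows "dominating (V - {u}) adj D"
  using assms by (auto simp: dominating_def)

lemma dominating_insert:
  assumes "dominating (V - {u}) adj D" "u \<in> V"
  shows "dominating V adj (insert u D)"
  using assms by (auto simp: dominating_def)

lemma dominating_image:
  assumes "dominating V adj D" "f ` V = V"
    and "\<And>x y. x \<in> V \<Longrightarrow> y \<in> V \<Longrightarrow> adj x y \<Longrightarrow> adj (f x) (f y)"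
  shows "dominating V adj (f ` D)"
  unfolding dominating_def
proof (intro conjI ballI)
  have "D \<subseteq> V"
    using assms(1) by (simp add: dominating_def)
  then show "f ` D \<subseteq> V"
    using assms(2) by blast
  fix v
  assume v: "v \<in> V - f ` D"
  then obtain w where w: "w \<in> V" "v = f w"
    using assms(2) by blast
  with v have "w \<in> V - D"
    by blast
  then obtain d where "d \<in> D" "adj w d"
    using assms(1) by (auto simp: dominating_def)
  then show "\<exists>d\<in>f ` D. adj v d"
    using assms(3) w \<open>D \<subseteq> V\<close> by blast
qed

lemma card_dominated_le:
  assumes "dominating W adj D" "finite W"
  shows "card {v\<in>W. P v} \<le> card {d\<in>D. P d} + (\<Sum>d\<in>D. card {v\<in>W. P v \<and> adj v d})"
proof -
  have "finite D"
    using assms by (auto simp: dominating_def intro: finite_subset)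
  have "{v\<in>W. P v} \<subseteq> {d\<in>D. P d} \<union> (\<Union>d\<in>D. {v\<in>W. P v \<and> adj v d})"
    using assms(1) by (auto simp: dominating_def)
  then have "card {v\<in>W. P v} \<le> card ({d\<in>D. P d} \<union> (\<Union>d\<in>D. {v\<in>W. P v \<and> adj v d}))"
    using assms(2) \<open>finite D\<close> by (intro card_mono) auto
  also have "\<dots> \<le> card {d\<in>D. P d} + card (\<Union>d\<in>D. {v\<in>W. P v \<and> adj v d})"
    by (rule card_Un_le)
  also have "card (\<Union>d\<in>D. {v\<in>W. P v \<and> adj v d}) \<le> (\<Sum>d\<in>D. card {v\<in>W. P v \<and> adj v d})"
    using \<open>finite D\<close> by (rule card_UN_le)
  finally show ?thesis
    by simp
qed

lemma card_dominated_le_degree: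
  assumes "dominating W adj D" "finite W" "\<And>d. d \<in> D \<Longrightarrow> card {v\<in>W. adj v d} \<le> k"
  shows "card W \<le> (k + 1) * card D"
proof -
  have "card {v\<in>W. True} \<le> card {d\<in>D. True} + (\<Sum>d\<in>D. card {v\<in>W. True \<and> adj v d})"
    using assms(1,2) by (rule card_dominated_le)
  also have "(\<Sum>d\<in>D. card {v\<in>W. True \<and> adj v d}) \<le> card D * k"
    using assms(3) sum_bounded_above[of D "\<lambda>d. card {v\<in>W. adj v d}" k] by simp
  finally show ?thesis
    by (simp add: algebra_simps)
qed

lemma mod_add_inverse:
  fixes j s m :: nat
  assumes "j < m"
  shows "((j + s) mod m + (m - s mod m)) mod m = j"
proof -
  define q r where "q = s div m" and "r = s mod m"
  have "r \<le> m" "s = m * q + r"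
    using assms by (simp_all add: q_def r_def less_imp_le)
  then have sum: "j + s + (m - r) = j + m * q + m"
    by linarith
  have "((j + s) mod m + (m - r)) mod m = (j + s + (m - r)) mod m"
    by (rule mod_add_left_eq)
  also have "\<dots> = j"
    unfolding sum using assms by simp
  finally show ?thesis
    by (simp only: r_def)
qed

lemma mem_knodel_vertices: "(i, j) \<in> knodel_vertices n \<longleftrightarrow> (i = 1 \<or> i = 2) \<and> j < n div 2"
  by (auto simp: knodel_vertices_def)

lemma finite_knodel_vertices: "finite (knodel_vertices n)"
  by (simp add: knodel_vertices_def)

lemma card_knodel_side:
  assumes "i = 1 \<or> i = 2"
  shows "card {v \<in> knodel_vertices n. fst v = i} = n div 2"
proof -
  have "{v \<in> knodel_vertices n. fst v = i} = {i} \<times> {0..<n div 2}"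
    using assms by (auto simp: knodel_vertices_def)
  then show ?thesis
    by (simp add: card_cartesian_product)
qed

lemma knodel_edge_sym: "knodel_edge \<Delta> n x y \<longleftrightarrow> knodel_edge \<Delta> n y x"
  unfolding knodel_edge_def by blast

lemma knodel_edge_fst: "knodel_edge \<Delta> n x y \<Longrightarrow> fst x \<noteq> fst y"
  unfolding knodel_edge_def by auto

lemma add_pow2_minus_one: "a + 2 ^ k - 1 = a + (2 ^ k - 1 :: nat)"
  by (simp add: Nat.add_diff_assoc)

(* Regrouping (x + 2^k) - 1 as x + (2^k - 1) turns the neighbour into an additive offset,
   to which the modular arithmetic rules apply. *)
lemma knodel_edge_iff:
  "knodel_edge \<Delta> n x y \<longleftrightarrow> x \<in> knodel_vertices n \<and> y \<in> knodel_vertices n \<and>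
     (\<exists>k < \<Delta>.
        (fst x = 1 \<and> fst y = 2 \<and> snd y = (snd x + (2 ^ k - 1)) mod (n div 2)) \<or>
        (fst y = 1 \<and> fst x = 2 \<and> snd x = (snd y + (2 ^ k - 1)) mod (n div 2)))"
  unfolding knodel_edge_def add_pow2_minus_one ..

lemma card_knodel_neighbours_le: "card {v. knodel_edge \<Delta> n v d} \<le> \<Delta>"
proof -
  define m where "m = n div 2"
  (* on side 2, the neighbour (1, j) at offset 2^k - 1 is recovered by rotating back *)
  define f where "f k = (if fst d = 1 then (2::nat, (snd d + (2 ^ k - 1)) mod m)
                         else (1, (snd d + (m - (2 ^ k - 1) mod m)) mod m))" for k :: nat
  have "{v. knodel_edge \<Delta> n v d} \<subseteq> f ` {..<\<Delta>}"
  proof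
    fix v
    assume "v \<in> {v. knodel_edge \<Delta> n v d}"
    then obtain k where k: "k < \<Delta>" and v: "v \<in> knodel_vertices n"
      and e: "(fst d = 1 \<and> fst v = 2 \<and> snd v = (snd d + (2 ^ k - 1)) mod m) \<or>
              (fst v = 1 \<and> fst d = 2 \<and> snd d = (snd v + (2 ^ k - 1)) mod m)"
      unfolding knodel_edge_iff m_def by blast
    have "snd v < m"
      using v by (cases v) (simp add: mem_knodel_vertices m_def)
    then have "v = f k"
      using e mod_add_inverse[of "snd v" m "2 ^ k - 1"] by (cases v) (auto simp: f_def)
    with k show "v \<in> f ` {..<\<Delta>}"
      by blast
  qed
  then have "card {v. knodel_edge \<Delta> n v d} \<le> card (f ` {..<\<Delta>})"
    by (intro card_mono) auto
  also have "\<dots> \<le> \<Delta>"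
    using card_image_le[of "{..<\<Delta>}" f] by simp
  finally show ?thesis .
qed

definition knodel_rotate :: "nat \<Rightarrow> nat \<Rightarrow> nat \<times> nat \<Rightarrow> nat \<times> nat" where
  "knodel_rotate n s v = (fst v, (snd v + s) mod (n div 2))"

lemma fst_knodel_rotate [simp]: "fst (knodel_rotate n s v) = fst v"
  by (simp add: knodel_rotate_def)

lemma knodel_rotate_in_vertices:
  "v \<in> knodel_vertices n \<Longrightarrow> knodel_rotate n s v \<in> knodel_vertices n"
  by (cases v) (auto simp: mem_knodel_vertices knodel_rotate_def)

lemma knodel_rotate_inverse:
  assumes "v \<in> knodel_vertices n"
  shows "knodel_rotate n (n div 2 - s mod (n div 2)) (knodel_rotate n s v) = v"
  using assms mod_add_inverse[of "snd v" "n div 2" s]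
  by (cases v) (simp add: mem_knodel_vertices knodel_rotate_def)

lemma inj_on_knodel_rotate: "inj_on (knodel_rotate n s) (knodel_vertices n)"
  by (rule inj_on_inverseI) (rule knodel_rotate_inverse)

lemma knodel_rotate_image: "knodel_rotate n s ` knodel_vertices n = knodel_vertices n"
  by (intro endo_inj_surj finite_knodel_vertices inj_on_knodel_rotate)
    (auto intro: knodel_rotate_in_vertices)

lemma snd_knodel_rotate_offset:
  assumes "snd y = (snd x + c) mod (n div 2)"
  shows "snd (knodel_rotate n s y) = (snd (knodel_rotate n s x) + c) mod (n div 2)"
  using assms by (simp add: knodel_rotate_def mod_simps ac_simps)

lemma knodel_edge_rotate:
  assumes "knodel_edge \<Delta> n x y"
  shows "knodel_edge \<Delta> n (knodel_rotate n s x) (knodel_rotate n s y)"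
  using assms knodel_rotate_in_vertices snd_knodel_rotate_offset
  unfolding knodel_edge_iff fst_knodel_rotate by blast

lemma finite_knodel_neighbours: "finite {v. knodel_edge \<Delta> n v d}"
  by (rule finite_subset[OF _ finite_knodel_vertices]) (auto simp: knodel_edge_def)

lemma knodel_dominating_side_le:
  assumes "dominating W (knodel_edge \<Delta> n) D" "W \<subseteq> knodel_vertices n"
  shows "card {v\<in>W. fst v = i} \<le> card {d\<in>D. fst d = i} + \<Delta> * card {d\<in>D. fst d \<noteq> i}"
proof -
  have "finite W"
    using assms(2) finite_knodel_vertices by (rule finite_subset)
  then have "finite D"
    using assms(1) by (auto simp: dominating_def intro: finite_subset)
  have neighbours: "card {v\<in>W. fst v = i \<and> knodel_edge \<Delta> n v d} \<le> (if fst d \<noteq> i then \<Delta> else 0)"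
    for d
  proof (cases "fst d = i")
    case True
    then have "{v\<in>W. fst v = i \<and> knodel_edge \<Delta> n v d} = {}"
      using knodel_edge_fst by fastforce
    then have "card {v\<in>W. fst v = i \<and> knodel_edge \<Delta> n v d} = 0"
      by (simp only: card.empty)
    with True show ?thesis
      by simp
  next
    case False
    have "card {v\<in>W. fst v = i \<and> knodel_edge \<Delta> n v d} \<le> card {v. knodel_edge \<Delta> n v d}"
      by (intro card_mono finite_knodel_neighbours) blast
    with False card_knodel_neighbours_le[of \<Delta> n d] show ?thesis
      by simp
  qed
  have "card {v\<in>W. fst v = i}
      \<le> card {d\<in>D. fst d = i} + (\<Sum>d\<in>D. card {v\<in>W. fst v = i \<and> knodel_edge \<Delta> n v d})"
    using assms(1) \<open>finite W\<close> by (rule card_dominated_le)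
  also have "(\<Sum>d\<in>D. card {v\<in>W. fst v = i \<and> knodel_edge \<Delta> n v d})
      \<le> (\<Sum>d\<in>D. if fst d \<noteq> i then \<Delta> else 0)"
    by (rule sum_mono) (rule neighbours)
  also have "\<dots> = \<Delta> * card {d\<in>D. fst d \<noteq> i}"
    using \<open>finite D\<close> by (simp add: sum.inter_filter[symmetric])
  finally show ?thesis
    by simp
qed

lemma knodel_card_le_dominating:
  assumes "dominating W (knodel_edge \<Delta> n) D" "W \<subseteq> knodel_vertices n"
  shows "card W \<le> (\<Delta> + 1) * card D"
proof (rule card_dominated_le_degree[OF assms(1)])
  show "finite W"
    using assms(2) finite_knodel_vertices by (rule finite_subset)
  fix d
  have "card {v\<in>W. knodel_edge \<Delta> n v d} \<le> card {v. knodel_edge \<Delta> n v d}"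
    by (intro card_mono finite_knodel_neighbours) blast
  then show "card {v\<in>W. knodel_edge \<Delta> n v d} \<le> \<Delta>"
    using card_knodel_neighbours_le by (rule le_trans)
qed

lemma knodel_side_not_subset:
  assumes "finite D" "card D < n div 2"
  obtains a where "a < n div 2" "(i, a) \<notin> D"
proof -
  have "\<not> {i} \<times> {..<n div 2} \<subseteq> D"
  proof
    assume "{i} \<times> {..<n div 2} \<subseteq> D"
    then have "card ({i} \<times> {..<n div 2}) \<le> card D"
      using assms(1) by (rule card_mono[rotated])
    with assms(2) show False
      by (simp add: card_cartesian_product)
  qed
  with that show ?thesis
    by auto
qed

lemma knodel_dominating_avoid:
  assumes "dominating (knodel_vertices n) (knodel_edge \<Delta> n) D" "card D < n div 2"
    and "u \<in> knodel_vertices n"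
  obtains D' where "dominating (knodel_vertices n) (knodel_edge \<Delta> n) D'" "card D' \<le> card D" "u \<notin> D'"
proof -
  define m where "m = n div 2"
  obtain i j where u: "u = (i, j)"
    by (cases u)
  have D: "D \<subseteq> knodel_vertices n"
    using assms(1) by (simp add: dominating_def)
  then have "finite D"
    using finite_knodel_vertices by (rule finite_subset)
  obtain a where a: "a < m" "(i, a) \<notin> D"
    unfolding m_def using \<open>finite D\<close> assms(2) by (rule knodel_side_not_subset)
  have "(i, a) \<in> knodel_vertices n" "j < m"
    using assms(3) a(1) by (auto simp: u m_def mem_knodel_vertices)
  define s where "s = j + m - a"
  have rot: "knodel_rotate n s (i, a) = u"
    using \<open>j < m\<close> a(1) by (simp add: knodel_rotate_def s_def u m_def[symmetric])
  have "u \<notin> knodel_rotate n s ` D"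
  proof
    assume "u \<in> knodel_rotate n s ` D"
    then obtain d where "d \<in> D" "knodel_rotate n s d = knodel_rotate n s (i, a)"
      unfolding rot by blast
    then have "d = (i, a)"
      using inj_on_knodel_rotate D \<open>(i, a) \<in> knodel_vertices n\<close> by (blast dest: inj_onD)
    with a(2) \<open>d \<in> D\<close> show False
      by simp
  qed
  moreover have "card (knodel_rotate n s ` D) \<le> card D"
    using \<open>finite D\<close> by (rule card_image_le)
  moreover have "dominating (knodel_vertices n) (knodel_edge \<Delta> n) (knodel_rotate n s ` D)"
    using assms(1) knodel_rotate_image knodel_edge_rotate by (rule dominating_image)
  ultimately show ?thesis
    using that by blast
qed

lemma domination_number_knodel_delete_le:
  assumes "domination_number (knodel_vertices n) (knodel_edge \<Delta> n) < n div 2"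
    and "u \<in> knodel_vertices n"
  shows "domination_number (knodel_vertices n - {u}) (knodel_edge \<Delta> n)
           \<le> domination_number (knodel_vertices n) (knodel_edge \<Delta> n)"
proof -
  obtain D where D: "dominating (knodel_vertices n) (knodel_edge \<Delta> n) D"
    "card D = domination_number (knodel_vertices n) (knodel_edge \<Delta> n)"
    by (rule obtain_minimum_dominating)
  then obtain D' where "dominating (knodel_vertices n) (knodel_edge \<Delta> n) D'" "card D' \<le> card D" "u \<notin> D'"
    using assms knodel_dominating_avoid by metis
  then show ?thesis
    using D(2) domination_number_le dominating_Diff_singleton le_trans by metis
qed

lemma knodel_edge_3I:
  assumes "n = 2 * m" "x < m" "y < m" "y = x \<or> y = x + 1 \<or> y = x + 3 \<or> y + m = x + 3"
  shows "knodel_edge 3 n (1, x) (2, y)"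
proof -
  consider "y = x" | "y = x + 1" | "y = x + 3" | "y + m = x + 3"
    using assms(4) by blast
  then have "\<exists>k<3. y = (x + (2 ^ k - 1)) mod m"
  proof cases
    case 1
    with assms(3) show ?thesis
      by (intro exI[of _ 0]) simp
  next
    case 2
    with assms(3) show ?thesis
      by (intro exI[of _ 1]) simp
  next
    case 3
    with assms(3) show ?thesis
      by (intro exI[of _ 2]) simp
  next
    case 4
    with assms(3) show ?thesis
      by (intro exI[of _ 2]) (simp add: 4[symmetric])
  qed
  with assms(1-3) show ?thesis
    by (simp add: knodel_edge_iff mem_knodel_vertices)
qed

(* (1,4i) dominates (2,4i), (2,4i+1), (2,4i+3), and (2,4i+2) dominates (1,4i+1), (1,4i+2),
   (1,4i-1); only the wrap-around at the end of the cycle needs care. *)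
definition knodel_pattern :: "nat \<Rightarrow> nat \<Rightarrow> (nat \<times> nat) set" where
  "knodel_pattern a b = (\<lambda>i. (1, 4 * i)) ` {..<a} \<union> (\<lambda>i. (2, 4 * i + 2)) ` {..<b}"

lemma card_knodel_pattern_le: "card (knodel_pattern a b) \<le> a + b"
proof -
  have "card (knodel_pattern a b)
      \<le> card ((\<lambda>i. (1::nat, 4 * i)) ` {..<a}) + card ((\<lambda>i. (2::nat, 4 * i + 2)) ` {..<b})"
    unfolding knodel_pattern_def by (rule card_Un_le)
  also have "\<dots> \<le> a + b"
    using card_image_le[of "{..<a}" "\<lambda>i. (1::nat, 4 * i)"]
      card_image_le[of "{..<b}" "\<lambda>i. (2::nat, 4 * i + 2)"] by simp
  finally show ?thesis .
qed

lemma mem_knodel_pattern_1: "(1, x) \<in> knodel_pattern a b \<longleftrightarrow> x mod 4 = 0 \<and> x < 4 * a"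
proof -
  have "(\<exists>i<a. x = 4 * i) \<longleftrightarrow> x mod 4 = 0 \<and> x < 4 * a"
    by presburger
  then show ?thesis
    by (auto simp: knodel_pattern_def)
qed

lemma mem_knodel_pattern_2: "(2, y) \<in> knodel_pattern a b \<longleftrightarrow> y mod 4 = 2 \<and> y < 4 * b"
proof -
  have "(\<exists>i<b. y = 4 * i + 2) \<longleftrightarrow> y mod 4 = 2 \<and> y < 4 * b"
    by presburger
  then show ?thesis
    by (auto simp: knodel_pattern_def)
qed

lemma knodel_pattern_2I:
  assumes "y mod 4 = 2" "y < 4 * b + 2"
  shows "(2, y) \<in> knodel_pattern a b"
  using assms unfolding mem_knodel_pattern_2 by presburger

lemma knodel_pattern_subset:
  assumes "n = 2 * m" "4 * a \<le> m + 3" "4 * b \<le> m + 1"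
  shows "knodel_pattern a b \<subseteq> knodel_vertices n"
  using assms by (auto simp: knodel_pattern_def mem_knodel_vertices)

lemma knodel_pattern_dominates_side2:
  assumes "n = 2 * m" "m \<le> 4 * b + 2" "y < m" "y < 4 * a" "(2, y) \<notin> knodel_pattern a b"
  shows "\<exists>d\<in>knodel_pattern a b. knodel_edge 3 n (2, y) d"
proof -
  define x where "x = 4 * (y div 4)"
  have "y mod 4 \<noteq> 2"
    using assms(2,3,5) knodel_pattern_2I by fastforce
  then have "y = x \<or> y = x + 1 \<or> y = x + 3"
    unfolding x_def by presburger
  with assms(1,3) have "knodel_edge 3 n (1, x) (2, y)"
    by (intro knodel_edge_3I) (auto simp: x_def)
  moreover have "(1, x) \<in> knodel_pattern a b"
    unfolding mem_knodel_pattern_1 x_def using assms(4) by presburger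
  ultimately show ?thesis
    using knodel_edge_sym by blast
qed

(* The hypothesis on x = 3 (mod 4) excludes exactly the side-1 vertices whose neighbour
   (2, (x + 3) mod m) wraps around to 0 or 1. *)
lemma knodel_pattern_dominates_side1:
  assumes "n = 2 * m" "3 \<le> m" "m \<le> 4 * b + 2" "0 < b" "x < m" "x < 4 * a"
    and "(1, x) \<notin> knodel_pattern a b" "x mod 4 = 3 \<Longrightarrow> x + 3 \<noteq> m \<and> x + 2 \<noteq> m"
  shows "\<exists>d\<in>knodel_pattern a b. knodel_edge 3 n (1, x) d"
proof -
  have mem: "(2, y) \<in> knodel_pattern a b" if "y mod 4 = 2" "y < m" for y
    using that assms(3) by (intro knodel_pattern_2I) auto
  have "x mod 4 \<noteq> 0"
    using assms(6,7) unfolding mem_knodel_pattern_1 by simp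
  moreover have "x mod 4 = 3 \<longrightarrow> x + 3 \<noteq> m \<and> x + 2 \<noteq> m"
    using assms(8) by blast
  ultimately have "x mod 4 = 2 \<or> (x mod 4 = 1 \<and> x + 1 < m) \<or> (x mod 4 = 3 \<and> x + 3 < m) \<or> x + 3 = m + 2"
    using assms(5) by presburger
  then consider "x mod 4 = 2" | "x mod 4 = 1" "x + 1 < m" | "x mod 4 = 3" "x + 3 < m" | "x + 3 = m + 2"
    by blast
  then obtain y where "(2, y) \<in> knodel_pattern a b" "y < m"
    and "y = x \<or> y = x + 1 \<or> y = x + 3 \<or> y + m = x + 3"
  proof cases
    case 1
    with assms(5) mem show ?thesis
      by (intro that[of x]) auto
  next
    case 2
    then have "(x + 1) mod 4 = 2"
      by presburger
    with 2 mem show ?thesis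
      by (intro that[of "x + 1"]) auto
  next
    case 3
    then have "(x + 3) mod 4 = 2"
      by presburger
    with 3 mem show ?thesis
      by (intro that[of "x + 3"]) auto
  next
    case 4
    with assms(2) mem show ?thesis
      by (intro that[of 2]) auto
  qed
  with assms(1,5) show ?thesis
    using knodel_edge_3I by blast
qed

lemma dominating_knodel_pattern:
  assumes "n = 2 * m" "3 \<le> m" "m \<le> 4 * a" "m \<le> 4 * b + 2" "0 < b"
    and "W \<subseteq> knodel_vertices n" "knodel_pattern a b \<subseteq> W"
    and "\<And>x. (1, x) \<in> W \<Longrightarrow> x mod 4 = 3 \<Longrightarrow> x + 3 \<noteq> m \<and> x + 2 \<noteq> m"
  shows "dominating W (knodel_edge 3 n) (knodel_pattern a b)"
  unfolding dominating_def
proof (intro conjI ballI)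
  show "knodel_pattern a b \<subseteq> W"
    by fact
  fix v
  assume v: "v \<in> W - knodel_pattern a b"
  obtain i x where v_eq: "v = (i, x)"
    by (cases v)
  with v assms(1,6) have "i = 1 \<or> i = 2" "x < m"
    by (auto simp: mem_knodel_vertices)
  with v v_eq assms show "\<exists>d\<in>knodel_pattern a b. knodel_edge 3 n v d"
    using knodel_pattern_dominates_side1[of n m b x a] knodel_pattern_dominates_side2[of n m b x a]
    by auto
qed

lemma dominating_knodel_pattern_insert:
  assumes "n = 2 * m" "m = 4 * t + 1" "1 \<le> t"
  shows "dominating (knodel_vertices n) (knodel_edge 3 n) (insert (2, 4 * t) (knodel_pattern t t))"
  unfolding dominating_def
proof (intro conjI ballI)
  show "insert (2, 4 * t) (knodel_pattern t t) \<subseteq> knodel_vertices n"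
    using assms knodel_pattern_subset[of n m t t] by (simp add: mem_knodel_vertices)
  fix v
  assume v: "v \<in> knodel_vertices n - insert (2, 4 * t) (knodel_pattern t t)"
  obtain i x where v_eq: "v = (i, x)"
    by (cases v)
  with v assms(1) have i: "i = 1 \<or> i = 2" and "x < m"
    by (auto simp: mem_knodel_vertices)
  show "\<exists>d\<in>insert (2, 4 * t) (knodel_pattern t t). knodel_edge 3 n v d"
  proof (cases "i = 1 \<and> (x = 4 * t \<or> x + 1 = 4 * t)")
    case True
    have "knodel_edge 3 n (1, x) (2, 4 * t)"
      using True assms(2) \<open>x < m\<close> by (intro knodel_edge_3I[OF assms(1)]) auto
    with True v_eq show ?thesis
      by blast
  next
    case False
    with v v_eq i assms(2) \<open>x < m\<close> have "x < 4 * t"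
      by auto
    have "x mod 4 = 3 \<Longrightarrow> x + 3 \<noteq> m \<and> x + 2 \<noteq> m" if "i = 1"
      using False that assms(2) by presburger
    with v v_eq i assms \<open>x < m\<close> \<open>x < 4 * t\<close>
    have "\<exists>d\<in>knodel_pattern t t. knodel_edge 3 n v d"
      using knodel_pattern_dominates_side1[of n m t x t] knodel_pattern_dominates_side2[of n m t x t]
      by auto
    then show ?thesis
      by blast
  qed
qed

lemma knodel3_small_dominating_set:
  assumes "n = 2 * m" "4 \<le> m" "m mod 4 \<noteq> 2"
  obtains D where "dominating (knodel_vertices n) (knodel_edge 3 n) D" "card D \<le> (m + 1) div 2"
proof -
  define t where "t = m div 4"
  have "1 \<le> t"
    using assms(2) by (simp add: t_def)
  have "m = 4 * t \<or> m = 4 * t + 1 \<or> m = 4 * t + 3"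
    using assms(3) unfolding t_def by presburger
  then consider "m = 4 * t" | "m = 4 * t + 1" | "m = 4 * t + 3"
    by blast
  then show ?thesis
  proof cases
    case 1
    have "x + 3 \<noteq> m \<and> x + 2 \<noteq> m" if "x mod 4 = 3" for x
      using 1 that by presburger
    with assms(1) 1 \<open>1 \<le> t\<close> knodel_pattern_subset[of n m t t]
    have "dominating (knodel_vertices n) (knodel_edge 3 n) (knodel_pattern t t)"
      by (intro dominating_knodel_pattern[of n m]) auto
    with 1 card_knodel_pattern_le[of t t] show ?thesis
      by (intro that) auto
  next
    case 2
    have "card (insert (2, 4 * t) (knodel_pattern t t)) \<le> 2 * t + 1"
      using card_knodel_pattern_le[of t t] by (intro card_insert_le_m1) simp_all
    with 2 dominating_knodel_pattern_insert[OF assms(1) 2 \<open>1 \<le> t\<close>] show ?thesis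
      by (intro that) auto
  next
    case 3
    have "x + 3 \<noteq> m \<and> x + 2 \<noteq> m" if "x mod 4 = 3" for x
      using 3 that by presburger
    with assms(1) 3 knodel_pattern_subset[of n m "t + 1" "t + 1"]
    have "dominating (knodel_vertices n) (knodel_edge 3 n) (knodel_pattern (t + 1) (t + 1))"
      by (intro dominating_knodel_pattern[of n m]) auto
    with 3 card_knodel_pattern_le[of "t + 1" "t + 1"] show ?thesis
      by (intro that) auto
  qed
qed

lemma knodel3_dominating_delete:
  assumes "n = 2 * m" "4 \<le> m" "m mod 4 = 2"
  obtains D where "dominating (knodel_vertices n - {(1, m - 3)}) (knodel_edge 3 n) D"
    "card D \<le> m div 2"
proof -
  define t where "t = m div 4"
  have t: "m = 4 * t + 2" "1 \<le> t"
    using assms(2,3) unfolding t_def by presburger+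
  have "(1, m - 3) \<notin> knodel_pattern (t + 1) t"
    unfolding mem_knodel_pattern_1 using t by presburger
  moreover have "x + 3 \<noteq> m \<and> x + 2 \<noteq> m"
    if "(1, x) \<in> knodel_vertices n - {(1, m - 3)}" "x mod 4 = 3" for x
    using that t(1) by auto
  ultimately have "dominating (knodel_vertices n - {(1, m - 3)}) (knodel_edge 3 n) (knodel_pattern (t + 1) t)"
    using assms(1) t knodel_pattern_subset[of n m "t + 1" t]
    by (intro dominating_knodel_pattern[of n m]) auto
  with t card_knodel_pattern_le[of "t + 1" t] show ?thesis
    by (intro that) auto
qed

lemma card_knodel_vertices: "card (knodel_vertices n) = 2 * (n div 2)"
  by (simp add: knodel_vertices_def card_cartesian_product)

lemma card_knodel_sides:
  assumes "D \<subseteq> knodel_vertices n"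
  shows "card D = card {d\<in>D. fst d = 1} + card {d\<in>D. fst d = 2}"
proof -
  have "finite D"
    using assms finite_knodel_vertices by (rule finite_subset)
  then have "card ({d\<in>D. fst d = 1} \<union> {d\<in>D. fst d = 2}) = card {d\<in>D. fst d = 1} + card {d\<in>D. fst d = 2}"
    by (intro card_Un_disjoint) auto
  moreover have "{d\<in>D. fst d = 1} \<union> {d\<in>D. fst d = 2} = D"
    using assms by (auto simp: knodel_vertices_def)
  ultimately show ?thesis
    by simp
qed

lemma knodel_dominating_sides:
  assumes "dominating (knodel_vertices n) (knodel_edge \<Delta> n) D"
  shows "n div 2 \<le> card {d\<in>D. fst d = 1} + \<Delta> * card {d\<in>D. fst d = 2}"
    and "n div 2 \<le> card {d\<in>D. fst d = 2} + \<Delta> * card {d\<in>D. fst d = 1}"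
proof -
  have "D \<subseteq> knodel_vertices n"
    using assms by (simp add: dominating_def)
  then have "{d\<in>D. fst d \<noteq> 1} = {d\<in>D. fst d = 2}" "{d\<in>D. fst d \<noteq> 2} = {d\<in>D. fst d = 1}"
    by (force simp: knodel_vertices_def)+
  then show "n div 2 \<le> card {d\<in>D. fst d = 1} + \<Delta> * card {d\<in>D. fst d = 2}"
    and "n div 2 \<le> card {d\<in>D. fst d = 2} + \<Delta> * card {d\<in>D. fst d = 1}"
    using knodel_dominating_side_le[OF assms order_refl, of 1] knodel_dominating_side_le[OF assms order_refl, of 2]
      card_knodel_side[of 1 n] card_knodel_side[of 2 n] by simp_all
qed

lemma two_sided_count_mod_4_eq_2:
  fixes m p q :: nat
  assumes "m mod 4 = 2" "m \<le> p + 3 * q" "m \<le> q + 3 * p"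
  shows "m div 2 + 1 \<le> p + q"
proof (rule ccontr)
  define t where "t = m div 4"
  have t: "m = 4 * t + 2"
    using assms(1) unfolding t_def by presburger
  assume "\<not> m div 2 + 1 \<le> p + q"
  with t have "p + q \<le> 2 * t + 1"
    by simp
  with t assms(2,3) have "2 * t + 1 \<le> 2 * q" "2 * t + 1 \<le> 2 * p"
    by linarith+
  then have "t + 1 \<le> q" "t + 1 \<le> p"
    by presburger+
  with \<open>p + q \<le> 2 * t + 1\<close> show False
    by linarith
qed

lemma domination_number_knodel3_ge:
  assumes "n = 2 * m"
  shows "(m + 1) div 2 + (if m mod 4 = 2 then 1 else 0)
           \<le> domination_number (knodel_vertices n) (knodel_edge 3 n)"
proof -
  obtain D where D: "dominating (knodel_vertices n) (knodel_edge 3 n) D"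
    "card D = domination_number (knodel_vertices n) (knodel_edge 3 n)"
    by (rule obtain_minimum_dominating)
  have "2 * m \<le> 4 * card D"
    using knodel_card_le_dominating[OF D(1) order_refl] assms by (simp add: card_knodel_vertices)
  moreover have "m div 2 + 1 \<le> card D" if "m mod 4 = 2"
    using two_sided_count_mod_4_eq_2[OF that] knodel_dominating_sides[OF D(1)] assms
      card_knodel_sides[of D n] D(1) by (simp add: dominating_def)
  ultimately show ?thesis
    using D(2) by auto presburger+
qed

lemma domination_number_knodel3_delete_ge:
  assumes "n = 2 * m" "m mod 4 \<noteq> 2" "u \<in> knodel_vertices n"
  shows "(m + 1) div 2 \<le> domination_number (knodel_vertices n - {u}) (knodel_edge 3 n)"
proof -
  obtain D where D: "dominating (knodel_vertices n - {u}) (knodel_edge 3 n) D"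
    "card D = domination_number (knodel_vertices n - {u}) (knodel_edge 3 n)"
    by (rule obtain_minimum_dominating)
  have "card (knodel_vertices n - {u}) \<le> 4 * card D"
    using knodel_card_le_dominating[OF D(1)] by simp
  then have "2 * m \<le> 4 * card D + 1"
    using assms(1,3) finite_knodel_vertices by (simp add: card_Diff_singleton card_knodel_vertices)
  with assms(2) D(2) show ?thesis
    by presburger
qed

lemma domination_number_knodel3:
  assumes "n = 2 * m" "4 \<le> m"
  shows "domination_number (knodel_vertices n) (knodel_edge 3 n)
           = (m + 1) div 2 + (if m mod 4 = 2 then 1 else 0)"
proof (rule antisym[OF _ domination_number_knodel3_ge[OF assms(1)]])
  show "domination_number (knodel_vertices n) (knodel_edge 3 n)
          \<le> (m + 1) div 2 + (if m mod 4 = 2 then 1 else 0)"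
  proof (cases "m mod 4 = 2")
    case True
    then obtain D where D: "dominating (knodel_vertices n - {(1, m - 3)}) (knodel_edge 3 n) D"
      "card D \<le> m div 2"
      using knodel3_dominating_delete[OF assms] by blast
    have "(1, m - 3) \<in> knodel_vertices n"
      using assms by (simp add: mem_knodel_vertices)
    with D(1) have "dominating (knodel_vertices n) (knodel_edge 3 n) (insert (1, m - 3) D)"
      by (rule dominating_insert)
    then have "domination_number (knodel_vertices n) (knodel_edge 3 n) \<le> card (insert (1, m - 3) D)"
      by (rule domination_number_le)
    also have "\<dots> \<le> m div 2 + 1"
      using D(2) by (intro card_insert_le_m1) simp_all
    finally show ?thesis
      using True by simp
  next
    case False
    then obtain D where "dominating (knodel_vertices n) (knodel_edge 3 n) D" "card D \<le> (m + 1) div 2"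
      using knodel3_small_dominating_set[OF assms] by blast
    with False show ?thesis
      using domination_number_le le_trans by fastforce
  qed
qed

theorem corollary3p2:
  fixes n :: nat
  assumes "even n" and "n \<ge> 8"
  shows "gamma_stable (knodel_vertices n) (knodel_edge 3 n) \<longleftrightarrow> n mod 8 \<noteq> 4"
proof -
  obtain m where n: "n = 2 * m"
    using \<open>even n\<close> by blast
  with \<open>n \<ge> 8\<close> have "4 \<le> m"
    by simp
  note gamma = domination_number_knodel3[OF n this]
  from n have n8: "n mod 8 = 4 \<longleftrightarrow> m mod 4 = 2"
    by presburger
  show ?thesis
  proof (cases "m mod 4 = 2")
    case True
    then obtain D where "dominating (knodel_vertices n - {(1, m - 3)}) (knodel_edge 3 n) D"
      "card D \<le> m div 2"
      using knodel3_dominating_delete[OF n \<open>4 \<le> m\<close>] by blast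
    then have "domination_number (knodel_vertices n - {(1, m - 3)}) (knodel_edge 3 n) < m div 2 + 1"
      using domination_number_le by fastforce
    moreover have "(1, m - 3) \<in> knodel_vertices n"
      using n \<open>4 \<le> m\<close> by (simp add: mem_knodel_vertices)
    ultimately show ?thesis
      using gamma True n8 unfolding gamma_stable_def by force
  next
    case False
    with gamma n \<open>4 \<le> m\<close> have small: "domination_number (knodel_vertices n) (knodel_edge 3 n) < n div 2"
      by simp
    have "domination_number (knodel_vertices n - {u}) (knodel_edge 3 n)
            = domination_number (knodel_vertices n) (knodel_edge 3 n)"
      if "u \<in> knodel_vertices n" for u
      using domination_number_knodel_delete_le[OF small that]
        domination_number_knodel3_delete_ge[OF n False that] gamma False by simp
    with False n8 show ?thesis
      unfolding gamma_stable_def by simp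
  qed
qed

end
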